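(* Let $\Phi$ be the matrix (with respect to $h_0$) of a left-invariant metric on $G$ of nonnegative sectional curvature, and let $\mathfrak p_0\subset\mathfrak g$ be the eigenspace of $\Phi$ for its smallest eigenvalue (equivalently, the eigenspace of $\Psi=I-\Phi^{-1}$ for its smallest eigenvalue). If $X\in\mathfrak p_0$, $Y\in\mathfrak g$ and $[X,Y]=0$, then $[X,\Phi^{-1}Y]\in\mathfrak p_0$.
   Context: $G$ is a compact Lie group with Lie algebra $\mathfrak g$ and bi-invariant metric $h_0$. The matrix of a left-invariant metric $h$ is the unique $h_0$-self-adjoint positive definite endomorphism $\Phi$ of $\mathfrak g$ with $h(X,Y)=h_0(\Phi X,Y)$ for all $X,Y\in\mathfrak g$. *)

theory Defs
  imports "HOL-Analysis.Analysis"
begin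

text \<open>The Lie algebra g of a compact Lie group G is modelled as a finite-dimensional
real inner product space (type class euclidean_space; the inner product is the
bi-invariant metric h0) with a Lie bracket br for which h0 is ad-invariant.
These are exactly the Lie algebras of compact Lie groups.\<close>

definition compact_lie_algebra :: "('a::euclidean_space \<Rightarrow> 'a \<Rightarrow> 'a) \<Rightarrow> bool" where
  "compact_lie_algebra br \<longleftrightarrow>
     bilinear br \<and>
     (\<forall>x. br x x = 0) \<and>
     (\<forall>x y z. br x (br y z) + br y (br z x) + br z (br x y) = 0) \<and>
     (\<forall>x y z. inner (br x y) z = - inner y (br x z))"

definition metric_matrix :: "('a::euclidean_space \<Rightarrow> 'a) \<Rightarrow> bool" where
  "metric_matrix \<Phi> \<longleftrightarrow> linear \<Phi> \<and>
     (\<forall>x y. inner (\<Phi> x) y = inner x (\<Phi> y)) \<and>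
     (\<forall>x. x \<noteq> 0 \<longrightarrow> inner (\<Phi> x) x > 0)"

definition lmetric :: "('a::euclidean_space \<Rightarrow> 'a) \<Rightarrow> 'a \<Rightarrow> 'a \<Rightarrow> real" where
  "lmetric \<Phi> x y = inner (\<Phi> x) y"

text \<open>Levi-Civita connection on left-invariant fields (Koszul formula).\<close>
definition levi_civita ::
  "('a::euclidean_space \<Rightarrow> 'a \<Rightarrow> 'a) \<Rightarrow> ('a \<Rightarrow> 'a) \<Rightarrow> 'a \<Rightarrow> 'a \<Rightarrow> 'a" where
  "levi_civita br \<Phi> X Y = (THE W. \<forall>Z.
      2 * lmetric \<Phi> W Z = lmetric \<Phi> (br X Y) Z - lmetric \<Phi> (br Y Z) X + lmetric \<Phi> (br Z X) Y)"

definition curvature ::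
  "('a::euclidean_space \<Rightarrow> 'a \<Rightarrow> 'a) \<Rightarrow> ('a \<Rightarrow> 'a) \<Rightarrow> 'a \<Rightarrow> 'a \<Rightarrow> 'a \<Rightarrow> 'a" where
  "curvature br \<Phi> X Y Z =
     levi_civita br \<Phi> X (levi_civita br \<Phi> Y Z) - levi_civita br \<Phi> Y (levi_civita br \<Phi> X Z)
     - levi_civita br \<Phi> (br X Y) Z"

definition nonneg_sec_curv :: "('a::euclidean_space \<Rightarrow> 'a \<Rightarrow> 'a) \<Rightarrow> ('a \<Rightarrow> 'a) \<Rightarrow> bool" where
  "nonneg_sec_curv br \<Phi> \<longleftrightarrow> (\<forall>X Y. lmetric \<Phi> (curvature br \<Phi> X Y Y) X \<ge> 0)"

definition eigenvalues_of :: "('a::real_vector \<Rightarrow> 'a) \<Rightarrow> real set" where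
  "eigenvalues_of f = {l. \<exists>v. v \<noteq> 0 \<and> f v = l *\<^sub>R v}"

definition eigenspace :: "('a::real_vector \<Rightarrow> 'a) \<Rightarrow> real \<Rightarrow> 'a set" where
  "eigenspace f l = {v. f v = l *\<^sub>R v}"

definition smallest_eigenspace :: "('a::real_vector \<Rightarrow> 'a) \<Rightarrow> 'a set" where
  "smallest_eigenspace f = eigenspace f (Min (eigenvalues_of f))"

end

theory Submission
  imports Defs
begin

text \<open>Let \<open>l\<close> be the least eigenvalue of \<open>\<Phi>\<close>, \<open>W = \<Phi>\<inverse> Y\<close> and \<open>U = [X, W]\<close>.
  The Koszul formula, ad-invariance of \<open>h\<^sub>0\<close> and \<open>[X, \<Phi> W] = 0\<close> give
  \<open>4 h(R(X,W)W, X) = l\<^sup>2 h\<^sub>0(\<Phi>\<inverse> U, U) + 2 l |U|\<^sup>2 - 3 h\<^sub>0(\<Phi> U, U)\<close>.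
  As \<open>l\<close> is the minimum of the Rayleigh quotient of \<open>\<Phi>\<close>, we have \<open>h\<^sub>0(\<Phi> U, U) \<ge> l |U|\<^sup>2\<close>
  and \<open>l h\<^sub>0(\<Phi>\<inverse> U, U) \<le> |U|\<^sup>2\<close>, so the right-hand side is at most
  \<open>3 (l |U|\<^sup>2 - h\<^sub>0(\<Phi> U, U)) \<le> 0\<close>. Nonnegative curvature forces equality in the Rayleigh
  bound, and for a self-adjoint map this means that \<open>U\<close> is an eigenvector for \<open>l\<close>.\<close>

definition self_adjoint :: "('a::real_inner \<Rightarrow> 'a) \<Rightarrow> bool" where
  "self_adjoint T \<longleftrightarrow> linear T \<and> (\<forall>x y. inner (T x) y = inner x (T y))"

lemma
  assumes "self_adjoint T"
  shows self_adjoint_linear: "linear T"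
    and self_adjoint_inner: "inner (T x) y = inner x (T y)"
  using assms unfolding self_adjoint_def by blast+

lemma self_adjoint_minus_scaleR:
  assumes "self_adjoint T"
  shows "self_adjoint (\<lambda>x. T x - c *\<^sub>R x)"
  using self_adjoint_linear[OF assms] self_adjoint_inner[OF assms]
  by (auto simp: self_adjoint_def linear_add linear_scale
      algebra_simps intro!: linearI)

lemma self_adjoint_psd_kernel:
  fixes T :: "'a::real_inner \<Rightarrow> 'a"
  assumes T: "self_adjoint T" and psd: "\<And>x. 0 \<le> inner (T x) x" and "inner (T a) a = 0"
  shows "T a = 0"
proof (rule ccontr)
  define b where "b = T a"
  define c where "c = inner (T b) b"
  define t where "t = inner b b / (c + 1)"
  assume "T a \<noteq> 0"
  then have "0 < inner b b" by (simp add: b_def)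
  moreover have "0 \<le> c" using psd by (simp add: c_def)
  ultimately have "0 < t" and "t * c < 2 * inner b b"
    by (auto simp: t_def divide_simps)
  then have "t * (t * c - 2 * inner b b) < 0"
    by (simp add: mult_pos_neg)
  moreover have "inner (T (a - t *\<^sub>R b)) (a - t *\<^sub>R b) = t * (t * c - 2 * inner b b)"
    using assms(3) self_adjoint_inner[OF T, of b a]
    by (simp add: linear_diff linear_scale self_adjoint_linear[OF T]
        b_def c_def algebra_simps inner_commute)
  ultimately show False using psd by (metis not_le)
qed

lemma self_adjoint_rayleigh_eq_imp_eigenvector:
  fixes T :: "'a::real_inner \<Rightarrow> 'a"
  assumes "self_adjoint T" and "\<And>x. c * inner x x \<le> inner (T x) x"
    and "inner (T a) a = c * inner a a"
  shows "T a = c *\<^sub>R a"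
  using self_adjoint_psd_kernel[OF self_adjoint_minus_scaleR[OF assms(1), of c], of a] assms(2,3)
  by (simp add: inner_diff_left)

lemma finite_eigenvalues_self_adjoint:
  fixes T :: "'a::euclidean_space \<Rightarrow> 'a"
  assumes T: "self_adjoint T"
  shows "finite (eigenvalues_of T)"
proof -
  let ?E = "eigenvalues_of T"
  define v where "v l = (SOME v. v \<noteq> 0 \<and> T v = l *\<^sub>R v)" for l
  have v: "v l \<noteq> 0 \<and> T (v l) = l *\<^sub>R v l" if "l \<in> ?E" for l
    using that unfolding eigenvalues_of_def v_def by (rule CollectE) (rule someI_ex)
  have "inj_on v ?E"
  proof (rule inj_onI)
    fix l m assume "l \<in> ?E" "m \<in> ?E" "v l = v m"
    then show "l = m" using v by (metis scaleR_cancel_right)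
  qed
  moreover have "pairwise orthogonal (v ` ?E)"
  proof (clarsimp simp: pairwise_def orthogonal_def)
    fix l m assume l: "l \<in> ?E" and m: "m \<in> ?E" and "v l \<noteq> v m"
    then have "l \<noteq> m" by auto
    have "l * inner (v l) (v m) = inner (T (v l)) (v m)" using v[OF l] by simp
    also have "\<dots> = m * inner (v l) (v m)" using v[OF m] by (simp add: self_adjoint_inner[OF T])
    finally show "inner (v l) (v m) = 0" using \<open>l \<noteq> m\<close> by simp
  qed
  then have "independent (v ` ?E)"
    by (rule pairwise_orthogonal_independent) (use v in force)
  then have "finite (v ` ?E)" using independent_bound by blast
  ultimately show ?thesis using finite_imageD by blast
qed

lemma self_adjoint_rayleigh_min:
  fixes T :: "'a::euclidean_space \<Rightarrow> 'a"
  assumes T: "self_adjoint T"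
  shows "\<exists>\<mu>\<in>eigenvalues_of T. \<forall>x. \<mu> * inner x x \<le> inner (T x) x"
proof -
  let ?S = "sphere (0::'a) 1"
  let ?f = "\<lambda>x. inner (T x) x"
  obtain e :: 'a where "e \<in> Basis" using nonempty_Basis by blast
  then have "?S \<noteq> {}" by auto
  moreover have "continuous_on ?S ?f"
    using self_adjoint_linear[OF T]
    by (intro continuous_intros) (simp add: linear_continuous_on linear_conv_bounded_linear)
  ultimately obtain x0 where x0: "x0 \<in> ?S" and min: "\<And>y. y \<in> ?S \<Longrightarrow> ?f x0 \<le> ?f y"
    using continuous_attains_inf[OF compact_sphere] by blast
  have rayleigh: "?f x0 * inner x x \<le> ?f x" for x
  proof (cases "x = 0")
    case False
    then have "?f x0 \<le> ?f ((1 / norm x) *\<^sub>R x)" by (intro min) simp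
    also have "\<dots> = ?f x / (norm x)\<^sup>2"
      by (simp add: linear_scale[OF self_adjoint_linear[OF T]] power2_eq_square)
    finally show ?thesis using False by (simp add: le_divide_eq power2_norm_eq_inner)
  qed simp
  have "inner x0 x0 = 1" using x0 by (simp add: power2_norm_eq_inner[symmetric])
  then have "T x0 = ?f x0 *\<^sub>R x0"
    by (intro self_adjoint_rayleigh_eq_imp_eigenvector[OF T rayleigh]) simp
  then have "?f x0 \<in> eigenvalues_of T"
    using x0 unfolding eigenvalues_of_def by (intro CollectI exI[of _ x0]) auto
  then show ?thesis using rayleigh by blast
qed

lemma
  fixes T :: "'a::euclidean_space \<Rightarrow> 'a"
  assumes "self_adjoint T"
  shows Min_eigenvalues_mem: "Min (eigenvalues_of T) \<in> eigenvalues_of T"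
    and Min_eigenvalues_rayleigh: "Min (eigenvalues_of T) * inner x x \<le> inner (T x) x"
proof -
  obtain \<mu> where \<mu>: "\<mu> \<in> eigenvalues_of T" and rayleigh: "\<And>x. \<mu> * inner x x \<le> inner (T x) x"
    using self_adjoint_rayleigh_min[OF assms] by blast
  have fin: "finite (eigenvalues_of T)" by (rule finite_eigenvalues_self_adjoint[OF assms])
  then show "Min (eigenvalues_of T) \<in> eigenvalues_of T" using \<mu> by (intro Min_in) auto
  have "Min (eigenvalues_of T) \<le> \<mu>" using fin \<mu> by simp
  then show "Min (eigenvalues_of T) * inner x x \<le> inner (T x) x"
    using rayleigh[of x] by (meson inner_ge_zero mult_right_mono order_trans)
qed

lemma rayleigh_bound_inverse:
  fixes T :: "'a::real_inner \<Rightarrow> 'a"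
  assumes "self_adjoint T" and "0 \<le> l" and "\<And>x. l * inner x x \<le> inner (T x) x" and "T v = u"
  shows "l * inner v u \<le> inner u u"
proof -
  have "inner u u - l * inner v u = inner (u - l *\<^sub>R v) (u - l *\<^sub>R v) + l * (inner (T v) v - l * inner v v)"
    using assms(4) by (simp add: inner_commute algebra_simps)
  moreover have "0 \<le> l * (inner (T v) v - l * inner v v)"
    using assms(2,3) by simp
  ultimately show ?thesis using inner_ge_zero[of "u - l *\<^sub>R v"] by linarith
qed

lemma metric_matrix_self_adjoint: "metric_matrix \<Phi> \<Longrightarrow> self_adjoint \<Phi>"
  by (simp add: metric_matrix_def self_adjoint_def)

lemma metric_matrix_eigenvalue_pos:
  assumes "metric_matrix \<Phi>" and "l \<in> eigenvalues_of \<Phi>"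
  shows "0 < l"
proof -
  obtain v where "v \<noteq> 0" and "\<Phi> v = l *\<^sub>R v"
    using assms(2) unfolding eigenvalues_of_def by blast
  then have "0 < l * inner v v" using assms(1) unfolding metric_matrix_def by (metis inner_scaleR_left)
  then show ?thesis using inner_ge_zero[of v] by (auto simp: zero_less_mult_iff)
qed

lemma metric_matrix_inv_right:
  assumes "metric_matrix \<Phi>"
  shows "\<Phi> (inv \<Phi> y) = y"
proof -
  have "linear \<Phi>" using assms by (simp add: metric_matrix_def)
  moreover have "\<Phi> x = 0 \<Longrightarrow> x = 0" for x
    using assms unfolding metric_matrix_def by force
  ultimately have "surj \<Phi>"
    by (simp add: linear_injective_0 linear_injective_imp_surjective)
  then show ?thesis by (rule surj_f_inv_f)
qed

locale left_invariant_metric =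
  fixes br :: "'a::euclidean_space \<Rightarrow> 'a \<Rightarrow> 'a" and \<Phi> :: "'a \<Rightarrow> 'a"
  assumes lie_algebra: "compact_lie_algebra br" and metric: "metric_matrix \<Phi>"
begin

lemma bracket_self [simp]: "br x x = 0"
  using lie_algebra by (simp add: compact_lie_algebra_def)

lemma bracket_ad_invariant: "inner (br x y) z = - inner y (br x z)"
  using lie_algebra by (simp add: compact_lie_algebra_def)

lemma bracket_antisym: "br x y = - br y x"
proof -
  have "bilinear br" using lie_algebra by (simp add: compact_lie_algebra_def)
  then have "br (x + y) (x + y) = br x x + br x y + (br y x + br y y)"
    by (simp only: bilinear_ladd bilinear_radd)
  then have "br x y + br y x = 0" by simp
  then show ?thesis by (simp add: eq_neg_iff_add_eq_0)
qed

lemma inner_bracket_self_left [simp]: "inner (br x y) x = 0"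
  using bracket_ad_invariant[of x y x] by simp

lemma inner_bracket_commuting:
  assumes "br x y = 0"
  shows "inner (br z x) y = 0" and "inner (br x z) y = 0"
  using assms bracket_ad_invariant[of x z y] bracket_antisym[of x z] by simp_all

lemma \<Phi>_linear: "linear \<Phi>"
  using metric by (simp add: metric_matrix_def)

lemma lmetric_eq_inner_right: "lmetric \<Phi> x y = inner x (\<Phi> y)"
  using metric by (simp add: lmetric_def metric_matrix_def)

lemma lmetric_diff_left: "lmetric \<Phi> (x - y) z = lmetric \<Phi> x z - lmetric \<Phi> y z"
  by (simp add: lmetric_def linear_diff[OF \<Phi>_linear] inner_diff_left)

lemma lmetric_nondegenerate:
  assumes "\<And>z. lmetric \<Phi> w z = lmetric \<Phi> w' z"
  shows "w = w'"
proof (rule ccontr)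
  assume "w \<noteq> w'"
  then have "0 < lmetric \<Phi> (w - w') (w - w')"
    using metric unfolding metric_matrix_def lmetric_def by (metis right_minus_eq)
  then show False using assms by (simp add: lmetric_diff_left)
qed

abbreviation koszul :: "'a \<Rightarrow> 'a \<Rightarrow> 'a \<Rightarrow> real" where
  "koszul x y z \<equiv> lmetric \<Phi> (br x y) z - lmetric \<Phi> (br y z) x + lmetric \<Phi> (br z x) y"

lemma koszul_solution:
  "2 * lmetric \<Phi> ((1/2) *\<^sub>R (br x y + inv \<Phi> (br x (\<Phi> y) + br y (\<Phi> x)))) z = koszul x y z"
proof -
  have "lmetric \<Phi> (br y z) x = - inner (br y (\<Phi> x)) z"
    by (metis bracket_ad_invariant inner_commute lmetric_eq_inner_right)
  moreover have "lmetric \<Phi> (br z x) y = inner (br x (\<Phi> y)) z"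
    by (metis bracket_ad_invariant bracket_antisym inner_commute inner_minus_left lmetric_eq_inner_right minus_minus)
  ultimately show ?thesis
    by (simp add: lmetric_def linear_add[OF \<Phi>_linear] linear_scale[OF \<Phi>_linear]
        metric_matrix_inv_right[OF metric] inner_add_left)
qed

lemma levi_civita_koszul: "2 * lmetric \<Phi> (levi_civita br \<Phi> x y) z = koszul x y z"
proof -
  let ?N = "(1/2) *\<^sub>R (br x y + inv \<Phi> (br x (\<Phi> y) + br y (\<Phi> x)))"
  have "levi_civita br \<Phi> x y = ?N"
    unfolding levi_civita_def
  proof (rule the_equality)
    fix w assume "\<forall>z. 2 * lmetric \<Phi> w z = koszul x y z"
    then have "2 * lmetric \<Phi> w z = 2 * lmetric \<Phi> ?N z" for z
      using koszul_solution by simp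
    then show "w = ?N" by (intro lmetric_nondegenerate) simp
  qed (use koszul_solution in blast)
  then show ?thesis using koszul_solution by simp
qed

lemma lmetric_zero_left [simp]: "lmetric \<Phi> 0 y = 0"
  by (simp add: lmetric_def linear_0[OF \<Phi>_linear])

lemma lmetric_commute: "lmetric \<Phi> x y = lmetric \<Phi> y x"
  by (metis inner_commute lmetric_def lmetric_eq_inner_right)

lemma lmetric_add_right: "lmetric \<Phi> x (y + z) = lmetric \<Phi> x y + lmetric \<Phi> x z"
  by (simp add: lmetric_def inner_add_right)

lemma lmetric_scaleR_right: "lmetric \<Phi> x (c *\<^sub>R y) = c * lmetric \<Phi> x y"
  by (simp add: lmetric_def)

context
  fixes X W :: 'a and l :: real
  assumes eigen: "\<Phi> X = l *\<^sub>R X" and commuting: "br X (\<Phi> W) = 0"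
begin

lemma lmetric_eigenvector_right: "lmetric \<Phi> z X = l * inner z X"
  by (simp add: lmetric_eq_inner_right eigen)

lemma lmetric_bracket_X_against_W: "lmetric \<Phi> (br z X) W = 0" "lmetric \<Phi> (br X z) W = 0"
  by (simp_all add: lmetric_eq_inner_right inner_bracket_commuting[OF commuting])

lemma lmetric_bracket_W_against_X: "lmetric \<Phi> (br W z) X = l * inner z (br X W)"
  by (simp add: lmetric_eigenvector_right bracket_ad_invariant[of W z X] bracket_antisym[of X W])

lemma levi_civita_eigenvector_self: "lmetric \<Phi> (levi_civita br \<Phi> X y) X = 0"
  using levi_civita_koszul[of X y X]
  by (simp add: lmetric_eigenvector_right bracket_antisym[of y X])

lemma levi_civita_eigenvector_commuting:
  "2 * lmetric \<Phi> (levi_civita br \<Phi> X W) z = lmetric \<Phi> (br X W) z - l * inner z (br X W)"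
  using levi_civita_koszul[of X W z] by (simp add: lmetric_bracket_W_against_X lmetric_bracket_X_against_W)

lemma curvature_second_term:
  defines "U \<equiv> br X W"
  shows "4 * lmetric \<Phi> (levi_civita br \<Phi> W (levi_civita br \<Phi> X W)) X
    = inner (\<Phi> U) U - l\<^sup>2 * inner (inv \<Phi> U) U"
proof -
  define Q where "Q = levi_civita br \<Phi> X W"
  define V where "V = inv \<Phi> U"
  have QV: "lmetric \<Phi> z V = inner z U" for z
    by (simp add: lmetric_eq_inner_right V_def metric_matrix_inv_right[OF metric])
  have UV: "inner (\<Phi> U) V = inner U U"
    using QV[of U] by (simp add: lmetric_def)
  have "2 * lmetric \<Phi> (levi_civita br \<Phi> W Q) X = l * inner Q U + lmetric \<Phi> U Q"
    using levi_civita_koszul[of W Q X]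
    by (simp add: lmetric_bracket_W_against_X lmetric_bracket_X_against_W U_def)
  also have "\<dots> = lmetric \<Phi> Q (l *\<^sub>R V + U)"
    by (simp add: lmetric_add_right lmetric_scaleR_right QV lmetric_commute[of U])
  finally have "4 * lmetric \<Phi> (levi_civita br \<Phi> W Q) X = 2 * lmetric \<Phi> Q (l *\<^sub>R V + U)"
    by simp
  also have "\<dots> = lmetric \<Phi> U (l *\<^sub>R V + U) - l * inner (l *\<^sub>R V + U) U"
    using levi_civita_eigenvector_commuting[of "l *\<^sub>R V + U"] by (simp add: Q_def U_def)
  also have "\<dots> = inner (\<Phi> U) U - l\<^sup>2 * inner V U"
    by (simp add: lmetric_def UV power2_eq_square algebra_simps)
  finally show ?thesis by (simp add: Q_def V_def)
qed

lemma curvature_third_term: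
  defines "U \<equiv> br X W"
  shows "2 * lmetric \<Phi> (levi_civita br \<Phi> U W) X = inner (\<Phi> U) U - l * inner U U"
proof -
  have WX: "br W X = - U" using bracket_antisym[of W X] by (simp add: U_def)
  have "lmetric \<Phi> (br U W) X = - l * inner U U"
    by (simp add: lmetric_eigenvector_right bracket_antisym[of U W] bracket_ad_invariant[of W U X] WX)
  moreover have "lmetric \<Phi> (br W X) U = - inner (\<Phi> U) U"
    by (simp add: WX lmetric_def linear_neg[OF \<Phi>_linear])
  ultimately show ?thesis
    using levi_civita_koszul[of U W X] by (simp add: U_def lmetric_bracket_X_against_W)
qed

lemma sectional_curvature_eigenvector_commuting:
  defines "U \<equiv> br X W"
  shows "4 * lmetric \<Phi> (curvature br \<Phi> X W W) X
    = l\<^sup>2 * inner (inv \<Phi> U) U + 2 * l * inner U U - 3 * inner (\<Phi> U) U"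
  using levi_civita_eigenvector_self curvature_second_term curvature_third_term
  by (simp add: U_def curvature_def lmetric_diff_left)

end

end

theorem mainTheorem6:
  fixes br :: "'a::euclidean_space \<Rightarrow> 'a \<Rightarrow> 'a" and \<Phi> :: "'a \<Rightarrow> 'a" and X Y :: 'a
  assumes "compact_lie_algebra br"
    and "metric_matrix \<Phi>"
    and "nonneg_sec_curv br \<Phi>"
    and "X \<in> smallest_eigenspace \<Phi>"
    and "br X Y = 0"
  shows "br X (inv \<Phi> Y) \<in> smallest_eigenspace \<Phi>"
proof -
  interpret left_invariant_metric br \<Phi> using assms(1,2) by unfold_locales
  define l where "l = Min (eigenvalues_of \<Phi>)"
  define U where "U = br X (inv \<Phi> Y)"
  have self_adj: "self_adjoint \<Phi>" using assms(2) by (rule metric_matrix_self_adjoint)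
  have rayleigh: "l * inner x x \<le> inner (\<Phi> x) x" for x
    unfolding l_def by (rule Min_eigenvalues_rayleigh[OF self_adj])
  have "0 < l"
    unfolding l_def by (rule metric_matrix_eigenvalue_pos[OF assms(2) Min_eigenvalues_mem[OF self_adj]])
  have "l * inner (inv \<Phi> U) U \<le> inner U U"
    using \<open>0 < l\<close> rayleigh metric_matrix_inv_right[OF assms(2)]
    by (intro rayleigh_bound_inverse[OF self_adj]) auto
  then have "l\<^sup>2 * inner (inv \<Phi> U) U \<le> l * inner U U"
    using \<open>0 < l\<close> by (simp add: power2_eq_square mult.assoc)
  moreover have "0 \<le> l\<^sup>2 * inner (inv \<Phi> U) U + 2 * l * inner U U - 3 * inner (\<Phi> U) U"
  proof -
    have "\<Phi> X = l *\<^sub>R X"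
      using assms(4) by (simp add: smallest_eigenspace_def eigenspace_def l_def)
    moreover have "br X (\<Phi> (inv \<Phi> Y)) = 0"
      using assms(5) by (simp add: metric_matrix_inv_right[OF assms(2)])
    ultimately have "4 * lmetric \<Phi> (curvature br \<Phi> X (inv \<Phi> Y) (inv \<Phi> Y)) X
        = l\<^sup>2 * inner (inv \<Phi> U) U + 2 * l * inner U U - 3 * inner (\<Phi> U) U"
      unfolding U_def by (rule sectional_curvature_eigenvector_commuting)
    moreover have "0 \<le> lmetric \<Phi> (curvature br \<Phi> X (inv \<Phi> Y) (inv \<Phi> Y)) X"
      using assms(3) by (simp add: nonneg_sec_curv_def)
    ultimately show ?thesis by linarith
  qed
  ultimately have "inner (\<Phi> U) U = l * inner U U"
    using rayleigh[of U] by linarith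
  then have "\<Phi> U = l *\<^sub>R U"
    using self_adj rayleigh by (intro self_adjoint_rayleigh_eq_imp_eigenvector)
  then show ?thesis by (simp add: U_def smallest_eigenspace_def eigenspace_def l_def)
qed

end
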